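(* Let $1\le k\le d$ and $\mu\ge1$ be integers, and let $t_0,\dots,t_\mu$ be defined by $t_\mu=1$ and $t_m=\sum_{j=m+1}^{\mu}t_j\,(j-m-1)\binom{d-k+1}{j-m}$ for $0\le m<\mu$. Then $$\sum_{m=0}^{\mu}t_m\binom{d}{m}=\sum_{m=0}^{\mu}(d-k)^{\mu-m}\binom{k}{m},\qquad \sum_{m=0}^{\mu}t_m\binom{d-1}{m-1}=\sum_{m=0}^{\mu}(d-k)^{\mu-m}\binom{k-1}{m-1},$$ $$\sum_{m=0}^{\mu}t_m\, m\left[\binom{d+1}{m+1}-\binom{d-k+1}{m+1}\right]=\sum_{m=0}^{\mu}k(d-k)^{\mu-m}\binom{k}{m}-\binom{k}{\mu+1}.$$
   Context: Conventions: $0^0=1$; $\binom{\ell}{m}=0$ if $m<0$ or $m>\ell$ (for $\ell\ge0$). *)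

theory Defs
  imports Main
begin

definition binom :: "nat \<Rightarrow> int \<Rightarrow> int" where
  "binom l m = (if m < 0 then 0 else int (l choose nat m))"

end

(*
  Put n = d - k and let U(x) = sum u_r x^r be the inverse of (1 + x)^n (1 - n x), whose
  coefficient at x^i (i >= 1) is -(i - 1) C(n+1, i). The recurrence for t then says exactly
  t_m = u_(mu-m), so sum_m t_m c_m is the coefficient of x^mu in U(x) C(x). As
  (1 + x)^n U(x) = 1/(1 - n x), taking C(x) = (1 + x)^d and C(x) = x (1 + x)^(d-1) gives the
  first two identities. For the third, m C(N+1, m+1) = N C(N, m) - C(N, m+1) turns the sums for
  N = d and N = n into coefficients of (1 + x)^N U(x) at x^mu and x^(mu+1); the two occurrences
  of u_(mu+1) cancel, and the rest is read off from (1 + x)^k / (1 - n x).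
*)

theory Submission
  imports Defs "HOL-Computational_Algebra.Formal_Power_Series"
begin

unbundle fps_syntax

lemma choose_Suc_weighted:
  "m * (Suc N choose Suc m) + (N choose Suc m) = N * (N choose m)"
proof -
  have "Suc m * (Suc N choose Suc m) = Suc N * (N choose m)" by (rule Suc_times_binomial)
  then show ?thesis by (simp add: algebra_simps)
qed

lemma fps_one_plus_X_power_nth:
  "((1 + fps_X) ^ n :: 'a::comm_semiring_1 fps) $ i = of_nat (n choose i)"
proof (induction n arbitrary: i)
  case 0
  show ?case by (cases i) simp_all
next
  case (Suc n)
  show ?case
  proof (cases i)
    case (Suc j)
    have "((1 + fps_X) ^ Suc n :: 'a fps) $ Suc j = (1 + fps_X) ^ n $ Suc j + (1 + fps_X) ^ n $ j"
      by (simp only: power_Suc fps_mult_fps_X_plus_1_nth) simp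
    also have "\<dots> = of_nat ((n choose Suc j) + (n choose j))"
      by (simp only: Suc.IH of_nat_add)
    finally show ?thesis by (simp only: Suc binomial_Suc_Suc add.commute)
  qed (simp add: Suc.IH)
qed

lemma fps_one_minus_X_mult_nth_Suc:
  "((1 - fps_const c * fps_X) * f :: 'a::comm_ring_1 fps) $ Suc r = f $ Suc r - c * f $ r"
  by (simp add: algebra_simps)

definition fps_geometric :: "'a::comm_ring_1 \<Rightarrow> 'a fps" where
  "fps_geometric c = Abs_fps (\<lambda>i. c ^ i)"

lemma fps_one_minus_X_mult_geometric: "(1 - fps_const c * fps_X) * fps_geometric c = 1"
proof (rule fps_ext)
  fix r show "((1 - fps_const c * fps_X) * fps_geometric c) $ r = 1 $ r"
    by (cases r) (simp_all only: fps_one_minus_X_mult_nth_Suc, simp_all add: fps_geometric_def)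
qed

lemma fps_mult_geometric_nth:
  "(f * fps_geometric c) $ r = (\<Sum>m=0..r. c ^ (r - m) * f $ m)"
  by (simp add: fps_mult_nth fps_geometric_def mult.commute)

lemma fps_one_plus_X_power_mult_nth_Suc:
  "((1 + fps_X) ^ N * f :: 'a::comm_semiring_1 fps) $ Suc r
     = f $ Suc r + (\<Sum>m=0..r. of_nat (N choose Suc m) * f $ (r - m))"
  by (simp only: fps_mult_nth sum.atLeast0_atMost_Suc_shift) (simp add: fps_one_plus_X_power_nth)

lemma convolution_mult_Suc_choose:
  fixes f :: "'a::comm_ring_1 fps"
  shows "(\<Sum>m=0..r. f $ (r - m) * of_nat (m * (Suc N choose Suc m)))
           = of_nat N * ((1 + fps_X) ^ N * f) $ r - ((1 + fps_X) ^ N * f) $ Suc r + f $ Suc r"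
proof -
  have "of_nat N * ((1 + fps_X) ^ N * f) $ r = (\<Sum>m=0..r. of_nat (N * (N choose m)) * f $ (r - m))"
    by (simp add: fps_mult_nth fps_one_plus_X_power_nth sum_distrib_left mult.assoc)
  also have "\<dots> = (\<Sum>m=0..r. f $ (r - m) * of_nat (m * (Suc N choose Suc m)))
                    + (\<Sum>m=0..r. of_nat (N choose Suc m) * f $ (r - m))"
    by (simp add: choose_Suc_weighted[symmetric] algebra_simps sum.distrib)
  finally show ?thesis by (simp add: fps_one_plus_X_power_mult_nth_Suc)
qed

lemma reversed_recurrence_eq_right_inverse_nth:
  fixes f :: "'a::comm_ring_1 fps" and t :: "nat \<Rightarrow> 'a"
  assumes top: "t \<mu> = 1"
    and rec: "\<And>m. m < \<mu> \<Longrightarrow> t m = - (\<Sum>j = m + 1..\<mu>. f $ (j - m) * t j)"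
    and "m \<le> \<mu>"
  shows "t m = fps_right_inverse f 1 $ (\<mu> - m)"
proof -
  have "t (\<mu> - r) = fps_right_inverse f 1 $ r" if "r \<le> \<mu>" for r
    using that
  proof (induction r rule: less_induct)
    case (less r)
    show ?case
    proof (cases r)
      case 0
      then show ?thesis by (simp add: top)
    next
      case (Suc s)
      have "t (\<mu> - r) = - (\<Sum>j = 1 + (\<mu> - r)..r + (\<mu> - r). f $ (j - (\<mu> - r)) * t j)"
        using rec[of "\<mu> - r"] less.prems Suc by (simp add: add.commute)
      also have "\<dots> = - (\<Sum>i = 1..r. f $ i * t (\<mu> - (r - i)))"
        using less.prems
        by (subst sum.shift_bounds_cl_nat_ivl) (intro arg_cong[where f = uminus] sum.cong; auto simp: add.commute)
      also have "\<dots> = - (\<Sum>i = 1..r. f $ i * fps_right_inverse f 1 $ (r - i))"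
      proof (intro arg_cong[where f = uminus] sum.cong refl)
        fix i assume "i \<in> {1..r}"
        then show "f $ i * t (\<mu> - (r - i)) = f $ i * fps_right_inverse f 1 $ (r - i)"
          using less.IH[of "r - i"] less.prems by simp
      qed
      also have "\<dots> = fps_right_inverse f 1 $ r"
        using Suc by simp
      finally show ?thesis .
    qed
  qed
  then show ?thesis
    using \<open>m \<le> \<mu>\<close> by (metis diff_diff_cancel diff_le_self)
qed

definition binomial_defect_fps :: "nat \<Rightarrow> 'a::comm_ring_1 fps" where
  "binomial_defect_fps n = (1 + fps_X) ^ n * (1 - fps_const (of_nat n) * fps_X)"

definition binomial_defect_inv :: "nat \<Rightarrow> 'a::comm_ring_1 fps" where
  "binomial_defect_inv n = fps_right_inverse (binomial_defect_fps n) 1"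

lemma binomial_defect_fps_nth_0 [simp]: "binomial_defect_fps n $ 0 = 1"
  by (simp add: binomial_defect_fps_def fps_one_plus_X_power_nth)

lemma binomial_defect_fps_nth_Suc:
  "binomial_defect_fps n $ Suc r = - of_nat (r * (Suc n choose Suc r))"
proof -
  have "binomial_defect_fps n $ Suc r = of_nat (n choose Suc r) - of_nat n * of_nat (n choose r)"
    by (simp add: binomial_defect_fps_def mult.commute[of "(1 + fps_X) ^ n"]
        fps_one_minus_X_mult_nth_Suc fps_one_plus_X_power_nth)
  also have "\<dots> = - of_nat (r * (Suc n choose Suc r))"
    by (simp flip: choose_Suc_weighted of_nat_mult)
  finally show ?thesis .
qed

lemma binomial_mult_binomial_defect_inv: "(1 + fps_X) ^ n * binomial_defect_inv n = fps_geometric (of_nat n)"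
proof -
  let ?c = "fps_const (of_nat n) * fps_X"
  have "(1 + fps_X) ^ n * binomial_defect_inv n = (1 + fps_X) ^ n * binomial_defect_inv n * ((1 - ?c) * fps_geometric (of_nat n))"
    by (simp add: fps_one_minus_X_mult_geometric)
  also have "\<dots> = binomial_defect_fps n * binomial_defect_inv n * fps_geometric (of_nat n)"
    by (simp add: binomial_defect_fps_def ac_simps)
  also have "\<dots> = fps_geometric (of_nat n)"
    by (simp add: binomial_defect_inv_def fps_right_inverse)
  finally show ?thesis .
qed

lemma binomial_defect_inv_convolution:
  "(\<Sum>m=0..r. binomial_defect_inv n $ (r - m) * (f * (1 + fps_X) ^ n) $ m)
     = (\<Sum>m=0..r. of_nat n ^ (r - m) * f $ m)"
proof -
  have "(\<Sum>m=0..r. binomial_defect_inv n $ (r - m) * (f * (1 + fps_X) ^ n) $ m)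
          = (f * (1 + fps_X) ^ n * binomial_defect_inv n) $ r"
    unfolding fps_mult_nth[of "f * (1 + fps_X) ^ n"] by (simp add: mult.commute)
  also have "\<dots> = (f * fps_geometric (of_nat n)) $ r"
    by (simp add: mult.assoc binomial_mult_binomial_defect_inv)
  finally show ?thesis by (simp add: fps_mult_geometric_nth)
qed

lemma binomial_defect_inv_weighted_convolution:
  "(\<Sum>m=0..r. binomial_defect_inv n $ (r - m) * of_nat m
       * (of_nat (Suc (k + n) choose Suc m) - of_nat (Suc n choose Suc m)))
     = of_nat k * (\<Sum>m=0..r. of_nat n ^ (r - m) * of_nat (k choose m)) - of_nat (k choose Suc r)"
proof -
  define U :: "'a fps" where "U = binomial_defect_inv n"
  define G :: "'a fps" where "G = fps_geometric (of_nat n)"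
  define A where "A = (1 + fps_X) ^ k * G"
  have A_eq: "(1 + fps_X) ^ (k + n) * U = A"
    by (simp add: A_def G_def U_def power_add mult.assoc binomial_mult_binomial_defect_inv)
  have G_eq: "(1 + fps_X) ^ n * U = G"
    by (simp add: G_def U_def binomial_mult_binomial_defect_inv)
  have big: "(\<Sum>m=0..r. U $ (r - m) * of_nat (m * (Suc (k + n) choose Suc m)))
                    = of_nat (k + n) * A $ r - A $ Suc r + U $ Suc r"
    unfolding A_eq[symmetric] by (rule convolution_mult_Suc_choose)
  have small: "(\<Sum>m=0..r. U $ (r - m) * of_nat (m * (Suc n choose Suc m)))
                 = of_nat n * G $ r - G $ Suc r + U $ Suc r"
    unfolding G_eq[symmetric] by (rule convolution_mult_Suc_choose)
  have "(1 - fps_const (of_nat n) * fps_X) * A = (1 + fps_X) ^ k"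
    by (simp add: A_def G_def mult.left_commute[of _ "(1 + fps_X) ^ k"] fps_one_minus_X_mult_geometric)
  then have A_Suc: "A $ Suc r = of_nat (k choose Suc r) + of_nat n * A $ r"
    using fps_one_minus_X_mult_nth_Suc[of "of_nat n" A r] by (simp add: fps_one_plus_X_power_nth)
  have G_Suc: "G $ Suc r = of_nat n * G $ r"
    by (simp add: G_def fps_geometric_def)
  have "(\<Sum>m=0..r. U $ (r - m) * of_nat m
          * (of_nat (Suc (k + n) choose Suc m) - of_nat (Suc n choose Suc m)))
        = (\<Sum>m=0..r. U $ (r - m) * of_nat (m * (Suc (k + n) choose Suc m)))
          - (\<Sum>m=0..r. U $ (r - m) * of_nat (m * (Suc n choose Suc m)))"
    by (simp add: sum_subtractf algebra_simps)
  also have "\<dots> = of_nat k * A $ r - of_nat (k choose Suc r)"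
    unfolding big small A_Suc G_Suc by (simp add: algebra_simps)
  finally show ?thesis
    by (simp add: U_def A_def G_def fps_mult_geometric_nth fps_one_plus_X_power_nth)
qed

lemma binom_of_nat: "binom l (int m) = int (l choose m)"
  by (simp add: binom_def)

lemma binom_Suc: "binom l (int m + 1) = int (l choose Suc m)"
  by (simp add: binom_def nat_add_distrib)

lemma binom_pred: "binom l (int m - 1) = (fps_X * (1 + fps_X) ^ l) $ m"
  by (cases m) (simp_all add: binom_def fps_one_plus_X_power_nth)

lemma binomial_defect_inv_reversed_recurrence:
  fixes t :: "nat \<Rightarrow> int"
  assumes "t \<mu> = 1"
    and rec: "\<And>m. m < \<mu> \<Longrightarrow>
           t m = (\<Sum>j = m + 1..\<mu>. t j * (int j - int m - 1) * binom (n + 1) (int j - int m))"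
    and "m \<le> \<mu>"
  shows "t m = binomial_defect_inv n $ (\<mu> - m)"
  unfolding binomial_defect_inv_def
proof (rule reversed_recurrence_eq_right_inverse_nth)
  show "t \<mu> = 1" and "m \<le> \<mu>" by fact+
next
  fix m assume "m < \<mu>"
  have "binomial_defect_fps n $ (j - m) * t j
          = - (t j * (int j - int m - 1) * binom (n + 1) (int j - int m))"
    if "m < j" for j
  proof -
    obtain i where i: "j - m = Suc i" "int j - int m = int (Suc i)"
      using \<open>m < j\<close> by (metis Suc_diff_Suc of_nat_diff less_imp_le)
    then show ?thesis
      by (simp only: i binom_of_nat binomial_defect_fps_nth_Suc) simp
  qed
  then show "t m = - (\<Sum>j = m + 1..\<mu>. binomial_defect_fps n $ (j - m) * t j)"
    using rec[OF \<open>m < \<mu>\<close>] by (simp add: sum_negf[symmetric])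
qed

theorem mainTheorem10:
  fixes k d \<mu> :: nat and t :: "nat \<Rightarrow> int"
  assumes "1 \<le> k" and "k \<le> d" and "1 \<le> \<mu>"
    and "t \<mu> = 1"
    and "\<And>m. m < \<mu> \<Longrightarrow>
           t m = (\<Sum>j = m + 1..\<mu>. t j * (int j - int m - 1) * binom (d - k + 1) (int j - int m))"
  shows "((\<Sum>m = 0..\<mu>. t m * binom d (int m))
           = (\<Sum>m = 0..\<mu>. (int d - int k) ^ (\<mu> - m) * binom k (int m))) \<and>
         ((\<Sum>m = 0..\<mu>. t m * binom (d - 1) (int m - 1))
           = (\<Sum>m = 0..\<mu>. (int d - int k) ^ (\<mu> - m) * binom (k - 1) (int m - 1))) \<and>
         ((\<Sum>m = 0..\<mu>. t m * int m * (binom (d + 1) (int m + 1) - binom (d - k + 1) (int m + 1)))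
           = (\<Sum>m = 0..\<mu>. int k * (int d - int k) ^ (\<mu> - m) * binom k (int m)) - binom k (int \<mu> + 1))"
proof -
  define n where "n = d - k"
  have d: "d = k + n" and d_minus_1: "d - 1 = (k - 1) + n" and dk: "int d - int k = int n"
    using assms(1,2) by (simp_all add: n_def)
  have conv: "(\<Sum>m = 0..\<mu>. t m * g m) = (\<Sum>m = 0..\<mu>. binomial_defect_inv n $ (\<mu> - m) * g m)" for g
    using binomial_defect_inv_reversed_recurrence[OF assms(4) assms(5)[folded n_def]]
    by (intro sum.cong) simp_all
  show ?thesis
    unfolding dk
  proof (intro conjI)
    have "(\<Sum>m = 0..\<mu>. t m * binom d (int m))
        = (\<Sum>m = 0..\<mu>. binomial_defect_inv n $ (\<mu> - m) * ((1 + fps_X) ^ k * (1 + fps_X) ^ n) $ m)"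
      by (simp add: conv binom_of_nat fps_one_plus_X_power_nth d flip: power_add)
    then show "(\<Sum>m = 0..\<mu>. t m * binom d (int m)) = (\<Sum>m = 0..\<mu>. int n ^ (\<mu> - m) * binom k (int m))"
      by (simp add: binomial_defect_inv_convolution binom_of_nat fps_one_plus_X_power_nth)
    have "(\<Sum>m = 0..\<mu>. t m * binom (d - 1) (int m - 1))
        = (\<Sum>m = 0..\<mu>. binomial_defect_inv n $ (\<mu> - m) * (fps_X * (1 + fps_X) ^ (k - 1) * (1 + fps_X) ^ n) $ m)"
      by (simp only: conv binom_pred d_minus_1 power_add mult.assoc)
    then show "(\<Sum>m = 0..\<mu>. t m * binom (d - 1) (int m - 1))
        = (\<Sum>m = 0..\<mu>. int n ^ (\<mu> - m) * binom (k - 1) (int m - 1))"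
      by (simp only: binomial_defect_inv_convolution binom_pred)
    have "(\<Sum>m = 0..\<mu>. t m * int m * (binom (d + 1) (int m + 1) - binom (d - k + 1) (int m + 1)))
        = (\<Sum>m = 0..\<mu>. binomial_defect_inv n $ (\<mu> - m) * int m
            * (int (Suc (k + n) choose Suc m) - int (Suc n choose Suc m)))"
      by (simp add: conv binom_Suc d mult.assoc)
    then show "(\<Sum>m = 0..\<mu>. t m * int m * (binom (d + 1) (int m + 1) - binom (d - k + 1) (int m + 1)))
        = (\<Sum>m = 0..\<mu>. int k * int n ^ (\<mu> - m) * binom k (int m)) - binom k (int \<mu> + 1)"
      by (subst (asm) binomial_defect_inv_weighted_convolution)
        (simp add: binom_Suc binom_of_nat sum_distrib_left mult.assoc)
  qed
qed

end
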